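(* Let $d\geq 3$ and let $(M,g)$ be the Kasner spacetime $M=(0,\infty)\times\mathbb{R}^d$, $g=-dt^2+\sum_{i=1}^d t^{2p_i}\,dx_i^2$, with $\sum_i p_i=1$, $\sum_i p_i^2=1$ and at least one $p_i<0$, time-oriented by $\partial_t$. Let $\tau:[a,b)\to M$ be a future (respectively past) directed timelike geodesic that is future (respectively past) inextendible. Then $(t\circ\tau)(s)\to\infty$ (respectively $(t\circ\tau)(s)\to 0$) as $s\to b$.
   Context: $t:M\to(0,\infty)$ is the first coordinate. A curve $\tau:[a,b)\to M$ is future (past) inextendible if it does not extend continuously to $b$ (in the respective time direction). *)

theory Defs
  imports "HOL-Analysis.Analysis"
begin

definition kasner_M :: "(real \<times> (real^'d)) set" where
  "kasner_M = {q. fst q > 0}"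

definition kasner_exponents :: "real^'d \<Rightarrow> bool" where
  "kasner_exponents p \<longleftrightarrow> (\<Sum>i\<in>UNIV. p$i) = 1 \<and> (\<Sum>i\<in>UNIV. (p$i)^2) = 1 \<and> (\<exists>i. p$i < 0)"

definition kasner_g :: "real^'d \<Rightarrow> real \<Rightarrow> real \<times> (real^'d) \<Rightarrow> real \<times> (real^'d) \<Rightarrow> real" where
  "kasner_g p t v w = - fst v * fst w + (\<Sum>i\<in>UNIV. t powr (2 * p$i) * (snd v)$i * (snd w)$i)"

definition half_open :: "real \<Rightarrow> ereal \<Rightarrow> real set" where
  "half_open a b = {s. a \<le> s \<and> ereal s < b}"

definition approach :: "ereal \<Rightarrow> real filter" where
  "approach b = (if b = \<infinity> then at_top else at_left (real_of_ereal b))"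

definition kasner_geodesic :: "real^'d \<Rightarrow> real set \<Rightarrow> (real \<Rightarrow> real \<times> (real^'d)) \<Rightarrow> bool" where
  "kasner_geodesic p I \<gamma> \<longleftrightarrow>
     (\<exists>\<gamma>' \<gamma>''. \<forall>s\<in>I.
        \<gamma> s \<in> kasner_M \<and>
        (\<gamma> has_vector_derivative \<gamma>' s) (at s within I) \<and>
        (\<gamma>' has_vector_derivative \<gamma>'' s) (at s within I) \<and>
        fst (\<gamma>'' s) + (\<Sum>i\<in>UNIV. p$i * fst (\<gamma> s) powr (2 * p$i - 1) * ((snd (\<gamma>' s))$i)^2) = 0 \<and>
        (\<forall>i. (snd (\<gamma>'' s))$i + 2 * (p$i / fst (\<gamma> s)) * fst (\<gamma>' s) * (snd (\<gamma>' s))$i = 0))"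

definition timelike_directed :: "real^'d \<Rightarrow> real set \<Rightarrow> (real \<Rightarrow> real \<times> (real^'d)) \<Rightarrow> bool \<Rightarrow> bool" where
  "timelike_directed p I \<gamma> fut \<longleftrightarrow>
     (\<forall>s\<in>I. \<exists>v. (\<gamma> has_vector_derivative v) (at s within I) \<and>
        kasner_g p (fst (\<gamma> s)) v v < 0 \<and>
        (if fut then kasner_g p (fst (\<gamma> s)) v (1, 0) < 0 else kasner_g p (fst (\<gamma> s)) v (1, 0) > 0))"

definition inextendible :: "ereal \<Rightarrow> (real \<Rightarrow> real \<times> (real^'d)) \<Rightarrow> bool" where
  "inextendible b \<gamma> \<longleftrightarrow> \<not> (\<exists>q\<in>kasner_M. (\<gamma> \<longlongrightarrow> q) (approach b))"

end

theory Submission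
  imports Defs
begin

text \<open>The metric does not depend on the spatial coordinates, so along a geodesic the momenta
  U_i = t^(2 p_i) x_i' are constant, and so is the energy E = g(\<gamma>', \<gamma>').  Hence
  t'^2 = \<Sum>_i U_i^2 t^(-2 p_i) - E \<ge> -E, which is positive for a timelike geodesic: t is strictly
  monotone with |t'| \<ge> sqrt(-E).  As long as t stays in a compact subinterval of (0, \<infinity>), the same
  identities bound |\<gamma>'|, so on a finite parameter interval \<gamma> would converge to a point of M,
  contradicting inextendibility.  Thus t \<rightarrow> \<infinity> to the future; to the past t decreases at least
  linearly while staying positive, so the parameter interval is finite and t \<rightarrow> 0.\<close>

lemma has_vector_derivative_fst:
  assumes "(f has_vector_derivative v) F"
  shows "((\<lambda>s. fst (f s)) has_real_derivative fst v) F"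
  using bounded_linear.has_vector_derivative[OF bounded_linear_fst assms]
  by (simp add: has_real_derivative_iff_has_vector_derivative)

lemma has_vector_derivative_snd_nth:
  fixes f :: "real \<Rightarrow> 'a::real_normed_vector \<times> (real^'n)"
  assumes "(f has_vector_derivative v) F"
  shows "((\<lambda>s. snd (f s) $ i) has_real_derivative snd v $ i) F"
proof -
  have "bounded_linear (\<lambda>x::'a \<times> (real^'n). snd x $ i)"
    using bounded_linear_compose[OF bounded_linear_vec_nth bounded_linear_snd] .
  from bounded_linear.has_vector_derivative[OF this assms] show ?thesis
    by (simp add: has_real_derivative_iff_has_vector_derivative)
qed

lemma convex_real_contains_interval:
  fixes I :: "real set"
  assumes "convex I" "x \<in> I" "y \<in> I"
  shows "{x..y} \<subseteq> I"
  using assms closed_segment_eq_real_ivl1[of x y]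
  by (cases "x \<le> y") (auto simp: convex_contains_segment)

lemma increment_ge_if_derivative_ge:
  fixes f f' :: "real \<Rightarrow> real"
  assumes "convex I"
    and deriv: "\<And>s. s \<in> I \<Longrightarrow> (f has_real_derivative f' s) (at s within I)"
    and ge: "\<And>s. s \<in> I \<Longrightarrow> \<kappa> \<le> f' s"
    and "x \<in> I" "y \<in> I" "x \<le> y"
  shows "\<kappa> * (y - x) \<le> f y - f x"
proof -
  have sub: "{x..y} \<subseteq> I"
    using assms by (intro convex_real_contains_interval)
  obtain \<xi> where \<xi>: "\<xi> \<in> {x..y}" "f y - f x = f' \<xi> * (y - x)"
  proof -
    have "(f has_derivative (*) (f' s)) (at s within {x..y})" if "s \<in> {x..y}" for s
      using has_field_derivative_subset[OF deriv sub] that sub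
      by (auto simp: has_field_derivative_def)
    then show ?thesis
      using mvt_very_simple[of x y f "\<lambda>s h. f' s * h"] \<open>x \<le> y\<close> that by auto
  qed
  moreover have "\<kappa> \<le> f' \<xi>"
    using ge \<xi>(1) sub by auto
  ultimately show ?thesis
    using \<open>x \<le> y\<close> by (simp add: mult_right_mono)
qed

lemma convergent_at_left_if_bounded_derivative:
  fixes f :: "real \<Rightarrow> 'b::banach"
  assumes "a < B"
    and deriv: "\<And>s. s \<in> {a..<B} \<Longrightarrow> (f has_vector_derivative f' s) (at s within {a..<B})"
    and bound: "\<And>s. s \<in> {a..<B} \<Longrightarrow> norm (f' s) \<le> K"
  shows "\<exists>l. (f \<longlongrightarrow> l) (at_left B)"
proof -
  have "norm (f' a) \<le> K"
    using bound \<open>a < B\<close> by simp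
  then have "0 \<le> K"
    by (rule order_trans[OF norm_ge_zero])
  moreover have "norm (f x - f y) \<le> K * norm (x - y)" if "x \<in> {a..<B}" "y \<in> {a..<B}" for x y
  proof (rule differentiable_bound[where f' = "\<lambda>s h. h *\<^sub>R f' s"])
    show "(f has_derivative (\<lambda>h. h *\<^sub>R f' s)) (at s within {a..<B})" if "s \<in> {a..<B}" for s
      using deriv[OF that] by (simp add: has_vector_derivative_def)
    show "onorm (\<lambda>h. h *\<^sub>R f' s) \<le> K" if "s \<in> {a..<B}" for s
      using bound[OF that] by (simp add: onorm_scaleR_left[OF bounded_linear_ident] onorm_id)
  qed (use that in auto)
  ultimately have "K-lipschitz_on {a..<B} f"
    by (auto simp: lipschitz_on_def dist_norm)
  then have "uniformly_continuous_on {a..<B} f"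
    by (rule lipschitz_on_uniformly_continuous)
  moreover have "B \<in> closure {a..<B}"
    using \<open>a < B\<close> by simp
  ultimately obtain l where "(f \<longlongrightarrow> l) (at B within {a..<B})"
    using uniformly_continuous_on_extension_at_closure by blast
  moreover have "at B within {a..<B} = at_left B"
    by (rule at_within_nhd[where S="{a<..}"]) (use \<open>a < B\<close> in auto)
  ultimately show ?thesis by auto
qed

lemma filterlim_at_top_at_left_if_mono_on:
  fixes f :: "real \<Rightarrow> real"
  assumes mono: "mono_on {a..<B} f" and unbounded: "\<And>Z. \<exists>s\<in>{a..<B}. Z \<le> f s"
  shows "filterlim f at_top (at_left B)"
  unfolding filterlim_at_top
proof
  fix Z
  obtain s0 where s0: "s0 \<in> {a..<B}" "Z \<le> f s0"
    using unbounded by blast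
  then have "eventually (\<lambda>s. s0 < s \<and> s < B) (at_left B)"
    using eventually_at_left_real[of s0 B] by auto
  then show "eventually (\<lambda>s. Z \<le> f s) (at_left B)"
  proof eventually_elim
    case (elim s)
    then have "f s0 \<le> f s"
      using s0 by (intro mono_onD[OF mono]) auto
    then show ?case
      using s0 by simp
  qed
qed

lemma tendsto_zero_at_left_if_antimono_on:
  fixes f :: "real \<Rightarrow> real"
  assumes antimono: "antimono_on {a..<B} f" and nonneg: "\<And>s. s \<in> {a..<B} \<Longrightarrow> 0 \<le> f s"
    and small: "\<And>e. 0 < e \<Longrightarrow> \<exists>s\<in>{a..<B}. f s < e"
  shows "(f \<longlongrightarrow> 0) (at_left B)"
proof (rule order_tendstoI)
  fix e :: real
  assume "e < 0"
  have "a < B"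
    using small[of 1] by auto
  then have "eventually (\<lambda>s. s \<in> {a..<B}) (at_left B)"
    using eventually_at_left_real[of a B] by (auto elim: eventually_mono)
  then show "eventually (\<lambda>s. e < f s) (at_left B)"
    by eventually_elim (use nonneg \<open>e < 0\<close> in force)
next
  fix e :: real
  assume "0 < e"
  then obtain s0 where s0: "s0 \<in> {a..<B}" "f s0 < e"
    using small by blast
  then have "eventually (\<lambda>s. s0 < s \<and> s < B) (at_left B)"
    using eventually_at_left_real[of s0 B] by auto
  then show "eventually (\<lambda>s. f s < e) (at_left B)"
  proof eventually_elim
    case (elim s)
    then have "f s \<le> f s0"
      using s0 by (intro monotone_onD[OF antimono]) auto
    then show ?case
      using s0 by simp
  qed
qed

lemma powr_le_add_powr_bounds:
  fixes t m M e :: real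
  assumes "0 < m" "m \<le> t" "t \<le> M"
  shows "t powr e \<le> m powr e + M powr e"
proof (cases "0 \<le> e")
  case True
  then have "t powr e \<le> M powr e"
    using assms by (intro powr_mono2) auto
  then show ?thesis
    using powr_ge_zero[of m e] by linarith
next
  case False
  then have "t powr e \<le> m powr e"
    using assms by (intro powr_mono2') auto
  then show ?thesis
    using powr_ge_zero[of M e] by linarith
qed

lemma half_open_cases:
  assumes "ereal a < b"
  obtains "b = \<infinity>" "half_open a b = {a..}"
    | B where "b = ereal B" "a < B" "half_open a b = {a..<B}"
proof (cases b)
  case (real B)
  moreover have "half_open a b = {a..<B}"
    using real by (auto simp: half_open_def)
  ultimately show ?thesis
    using assms that(2) by simp
next
  case PInf
  then show ?thesis
    using that(1) by (auto simp: half_open_def)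
qed (use assms in simp)

lemma convex_half_open: "convex (half_open a b)"
  unfolding is_interval_convex_1[symmetric] is_interval_1 half_open_def
  by (auto intro: order_le_less_trans[OF iffD2[OF ereal_less_eq(3)]])

lemma trivial_limit_within_half_open:
  assumes "ereal a < b" "s \<in> half_open a b"
  shows "at s within half_open a b \<noteq> bot"
proof -
  obtain c where c: "s < c" "{s..c} \<subseteq> half_open a b"
    using assms by (cases rule: half_open_cases) (auto intro: that[of "s + 1"] that[of "(s + B) / 2" for B])
  have "s islimpt {s..c}"
    using c(1) by (intro islimpt_closure_open[where s="{s<..<c}"]) auto
  then show ?thesis
    using c(2) islimpt_subset by (auto simp: trivial_limit_within)
qed

locale kasner_geodesic_curve =
  fixes p :: "real^'d" and a :: real and b :: ereal
    and \<gamma> \<gamma>' \<gamma>'' :: "real \<Rightarrow> real \<times> (real^'d)"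
  assumes a_less_b: "ereal a < b"
    and in_M: "s \<in> half_open a b \<Longrightarrow> \<gamma> s \<in> kasner_M"
    and velocity: "s \<in> half_open a b \<Longrightarrow> (\<gamma> has_vector_derivative \<gamma>' s) (at s within half_open a b)"
    and acceleration: "s \<in> half_open a b \<Longrightarrow> (\<gamma>' has_vector_derivative \<gamma>'' s) (at s within half_open a b)"
    and geodesic_time: "s \<in> half_open a b \<Longrightarrow>
      fst (\<gamma>'' s) + (\<Sum>i\<in>UNIV. p$i * fst (\<gamma> s) powr (2 * p$i - 1) * (snd (\<gamma>' s) $ i)^2) = 0"
    and geodesic_space: "s \<in> half_open a b \<Longrightarrow>
      snd (\<gamma>'' s) $ i + 2 * (p$i / fst (\<gamma> s)) * fst (\<gamma>' s) * snd (\<gamma>' s) $ i = 0"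
begin

abbreviation I :: "real set" where "I \<equiv> half_open a b"
abbreviation T :: "real \<Rightarrow> real" where "T s \<equiv> fst (\<gamma> s)"
abbreviation T' :: "real \<Rightarrow> real" where "T' s \<equiv> fst (\<gamma>' s)"
abbreviation X' :: "'d \<Rightarrow> real \<Rightarrow> real" where "X' i s \<equiv> snd (\<gamma>' s) $ i"

lemma left_endpoint_in_I: "a \<in> I"
  using a_less_b by (simp add: half_open_def)

lemma T_pos: "s \<in> I \<Longrightarrow> 0 < T s"
  using in_M by (simp add: kasner_M_def)

lemma has_real_derivative_T: "s \<in> I \<Longrightarrow> (T has_real_derivative T' s) (at s within I)"
  using has_vector_derivative_fst[OF velocity] .

lemma has_real_derivative_T': "s \<in> I \<Longrightarrow> (T' has_real_derivative fst (\<gamma>'' s)) (at s within I)"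
  using has_vector_derivative_fst[OF acceleration] .

lemma has_real_derivative_X': "s \<in> I \<Longrightarrow> (X' i has_real_derivative snd (\<gamma>'' s) $ i) (at s within I)"
  using has_vector_derivative_snd_nth[OF acceleration] .

lemma has_real_derivative_scale_factor:
  "s \<in> I \<Longrightarrow> ((\<lambda>s. T s powr (2 * p$i)) has_real_derivative 2 * p$i * T s powr (2 * p$i - 1) * T' s) (at s within I)"
  using DERIV_chain2[OF has_real_derivative_powr[OF T_pos] has_real_derivative_T] by simp

definition momentum :: "'d \<Rightarrow> real" where
  "momentum i = T a powr (2 * p$i) * X' i a"

lemma momentum_conserved:
  assumes "s \<in> I"
  shows "T s powr (2 * p$i) * X' i s = momentum i"
proof -
  have "\<exists>c. \<forall>s\<in>I. T s powr (2 * p$i) * X' i s = c"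
  proof (rule has_field_derivative_zero_constant[OF convex_half_open])
    fix s
    assume s: "s \<in> I"
    have "2 * p$i * T s powr (2 * p$i - 1) * T' s * X' i s + snd (\<gamma>'' s) $ i * T s powr (2 * p$i)
        = T s powr (2 * p$i) * (snd (\<gamma>'' s) $ i + 2 * (p$i / T s) * T' s * X' i s)"
      using T_pos[OF s] by (simp add: powr_diff field_simps)
    also have "\<dots> = 0"
      using geodesic_space[OF s] by simp
    finally show "((\<lambda>s. T s powr (2 * p$i) * X' i s) has_real_derivative 0) (at s within I)"
      using DERIV_mult[OF has_real_derivative_scale_factor[OF s, of i] has_real_derivative_X'[OF s, of i]] by simp
  qed
  then show ?thesis
    using assms left_endpoint_in_I by (metis momentum_def)
qed

lemma X'_eq: "s \<in> I \<Longrightarrow> X' i s = momentum i * T s powr (- 2 * p$i)"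
  using momentum_conserved[of s i, symmetric] T_pos[of s] by (simp add: powr_minus field_simps)

definition energy :: real where
  "energy = kasner_g p (T a) (\<gamma>' a) (\<gamma>' a)"

lemma kasner_g_velocity:
  "kasner_g p (T s) (\<gamma>' s) (\<gamma>' s) = (\<Sum>i\<in>UNIV. T s powr (2 * p$i) * (X' i s)^2) - (T' s)^2"
  by (simp add: kasner_g_def power2_eq_square mult.assoc)

lemma energy_conserved:
  assumes "s \<in> I"
  shows "kasner_g p (T s) (\<gamma>' s) (\<gamma>' s) = energy"
proof -
  have "\<exists>c. \<forall>s\<in>I. (\<Sum>i\<in>UNIV. T s powr (2 * p$i) * (X' i s)^2) - (T' s)^2 = c"
  proof (rule has_field_derivative_zero_constant[OF convex_half_open])
    fix s
    assume s: "s \<in> I"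
    define F where "F i = p$i * T s powr (2 * p$i - 1) * (X' i s)^2" for i
    have summand: "((\<lambda>s. T s powr (2 * p$i) * (X' i s)^2) has_real_derivative - 2 * T' s * F i) (at s within I)" for i
    proof -
      have X'': "snd (\<gamma>'' s) $ i = - 2 * (p$i / T s) * T' s * X' i s"
        using geodesic_space[OF s, of i] by simp
      have "T s powr (2 * p$i) = T s * T s powr (2 * p$i - 1)"
        using T_pos[OF s] by (simp add: powr_diff)
      then have "2 * p$i * T s powr (2 * p$i - 1) * T' s * (X' i s)^2
          + 2 * X' i s * snd (\<gamma>'' s) $ i * T s powr (2 * p$i) = - 2 * T' s * F i"
        unfolding X'' F_def using T_pos[OF s] by (simp add: field_simps power2_eq_square)
      then show ?thesis
        using DERIV_mult[OF has_real_derivative_scale_factor[OF s, of i] DERIV_power[OF has_real_derivative_X'[OF s, of i], of 2]]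
        by (simp add: mult_ac)
    qed
    have square: "((\<lambda>s. (T' s)^2) has_real_derivative - 2 * T' s * (\<Sum>i\<in>UNIV. F i)) (at s within I)"
    proof -
      have "fst (\<gamma>'' s) = - (\<Sum>i\<in>UNIV. F i)"
        using geodesic_time[OF s] by (simp add: F_def eq_neg_iff_add_eq_0)
      then show ?thesis
        using DERIV_power[OF has_real_derivative_T'[OF s], of 2] by (simp add: mult_ac)
    qed
    have "((\<lambda>s. \<Sum>i\<in>UNIV. T s powr (2 * p$i) * (X' i s)^2) has_real_derivative
        (\<Sum>i\<in>UNIV. - 2 * T' s * F i)) (at s within I)"
      by (rule DERIV_sum) (rule summand)
    from DERIV_diff[OF this square]
    show "((\<lambda>s. (\<Sum>i\<in>UNIV. T s powr (2 * p$i) * (X' i s)^2) - (T' s)^2)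
        has_real_derivative 0) (at s within I)"
      by (simp add: sum_negf sum_distrib_left)
  qed
  then show ?thesis
    using assms left_endpoint_in_I by (metis energy_def kasner_g_velocity)
qed

lemma T'_squared:
  assumes "s \<in> I"
  shows "(T' s)^2 = (\<Sum>i\<in>UNIV. (momentum i)^2 * T s powr (- 2 * p$i)) - energy"
proof -
  have "T s powr (2 * p$i) * (X' i s)^2 = (momentum i)^2 * T s powr (- 2 * p$i)" for i
  proof -
    have "T s powr (2 * p$i) * (X' i s)^2 = (T s powr (2 * p$i) * X' i s) * X' i s"
      by (simp add: power2_eq_square)
    then show ?thesis
      using momentum_conserved[OF assms, of i] X'_eq[OF assms, of i] by (simp add: power2_eq_square)
  qed
  then show ?thesis
    using energy_conserved[OF assms] by (simp add: kasner_g_velocity)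
qed

lemma velocity_unique:
  assumes "s \<in> I" "(\<gamma> has_vector_derivative v) (at s within I)"
  shows "v = \<gamma>' s"
  using vector_derivative_unique_within[OF trivial_limit_within_half_open[OF a_less_b assms(1)]
      assms(2) velocity[OF assms(1)]] .

lemma timelike_directed_velocity:
  assumes "timelike_directed p I \<gamma> fut" "s \<in> I"
  shows "energy < 0" and "if fut then 0 < T' s else T' s < 0"
proof -
  obtain v where v: "(\<gamma> has_vector_derivative v) (at s within I)" "kasner_g p (T s) v v < 0"
      "if fut then kasner_g p (T s) v (1, 0) < 0 else kasner_g p (T s) v (1, 0) > 0"
    using assms unfolding timelike_directed_def by blast
  moreover have "v = \<gamma>' s"
    using velocity_unique[OF assms(2) v(1)] .
  moreover have "kasner_g p (T s) (\<gamma>' s) (1, 0) = - T' s"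
    by (simp add: kasner_g_def)
  ultimately show "energy < 0" "if fut then 0 < T' s else T' s < 0"
    using energy_conserved[OF assms(2)] by (auto split: if_splits)
qed

lemma sqrt_neg_energy_le_abs_T':
  assumes "s \<in> I"
  shows "sqrt (- energy) \<le> \<bar>T' s\<bar>"
proof -
  have "- energy \<le> (T' s)^2"
    using T'_squared[OF assms] by (simp add: sum_nonneg)
  then show ?thesis
    using real_sqrt_le_mono by fastforce
qed

lemma future_T_increment_ge:
  assumes "timelike_directed p I \<gamma> True" "x \<in> I" "y \<in> I" "x \<le> y"
  shows "sqrt (- energy) * (y - x) \<le> T y - T x"
proof (rule increment_ge_if_derivative_ge[OF convex_half_open has_real_derivative_T _ assms(2-4)])
  fix s
  assume "s \<in> I"
  then show "sqrt (- energy) \<le> T' s"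
    using sqrt_neg_energy_le_abs_T' timelike_directed_velocity(2)[OF assms(1)] by force
qed

lemma past_T_decrement_ge:
  assumes "timelike_directed p I \<gamma> False" "x \<in> I" "y \<in> I" "x \<le> y"
  shows "sqrt (- energy) * (y - x) \<le> T x - T y"
proof -
  have "sqrt (- energy) * (y - x) \<le> - T y - - T x"
  proof (rule increment_ge_if_derivative_ge[OF convex_half_open DERIV_minus[OF has_real_derivative_T] _ assms(2-4)])
    fix s
    assume "s \<in> I"
    then show "sqrt (- energy) \<le> - T' s"
      using sqrt_neg_energy_le_abs_T' timelike_directed_velocity(2)[OF assms(1)] by force
  qed
  then show ?thesis
    by simp
qed

lemma velocity_bounded_if_T_bounded:
  assumes "0 < m" and T_bounds: "\<And>s. s \<in> I \<Longrightarrow> m \<le> T s \<and> T s \<le> M"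
  obtains K where "\<And>s. s \<in> I \<Longrightarrow> norm (\<gamma>' s) \<le> K"
proof -
  define C where "C i = m powr (- 2 * p$i) + M powr (- 2 * p$i)" for i
  have C: "T s powr (- 2 * p$i) \<le> C i" if "s \<in> I" for s i
    unfolding C_def using T_bounds[OF that] \<open>0 < m\<close> by (intro powr_le_add_powr_bounds) auto
  define K where
    "K = sqrt ((\<Sum>i\<in>UNIV. (momentum i)^2 * C i) - energy) + (\<Sum>i\<in>UNIV. \<bar>momentum i\<bar> * C i)"
  have "norm (\<gamma>' s) \<le> K" if s: "s \<in> I" for s
  proof -
    have "(T' s)^2 \<le> (\<Sum>i\<in>UNIV. (momentum i)^2 * C i) - energy"
      unfolding T'_squared[OF s] using C[OF s] by (intro diff_right_mono sum_mono mult_left_mono) auto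
    then have "\<bar>T' s\<bar> \<le> sqrt ((\<Sum>i\<in>UNIV. (momentum i)^2 * C i) - energy)"
      using real_sqrt_le_mono by fastforce
    moreover have "\<bar>X' i s\<bar> \<le> \<bar>momentum i\<bar> * C i" for i
      using C[OF s, of i] by (simp add: X'_eq[OF s] abs_mult mult_left_mono)
    ultimately have "\<bar>T' s\<bar> + (\<Sum>i\<in>UNIV. \<bar>X' i s\<bar>) \<le> K"
      unfolding K_def by (intro add_mono sum_mono) auto
    moreover have "norm (\<gamma>' s) \<le> \<bar>T' s\<bar> + (\<Sum>i\<in>UNIV. \<bar>X' i s\<bar>)"
      using norm_Pair_le[of "T' s" "snd (\<gamma>' s)"] norm_le_l1_cart[of "snd (\<gamma>' s)"] by simp
    ultimately show ?thesis
      by linarith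
  qed
  then show ?thesis
    by (rule that)
qed

lemma extendible_if_T_bounded:
  assumes "b = ereal B" "0 < m" "\<And>s. s \<in> I \<Longrightarrow> m \<le> T s \<and> T s \<le> M"
  shows "\<not> inextendible b \<gamma>"
proof -
  have I: "I = {a..<B}" and "a < B"
    using a_less_b assms(1) by (auto simp: half_open_def)
  obtain K where "\<And>s. s \<in> I \<Longrightarrow> norm (\<gamma>' s) \<le> K"
    using velocity_bounded_if_T_bounded assms(2,3) by blast
  then obtain q where q: "(\<gamma> \<longlongrightarrow> q) (at_left B)"
    using convergent_at_left_if_bounded_derivative[of a B \<gamma> \<gamma>' K] velocity I \<open>a < B\<close> by auto
  have "eventually (\<lambda>s. m \<le> T s) (at_left B)"
    using eventually_at_left_real[OF \<open>a < B\<close>] by eventually_elim (use assms(3) I in auto)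
  then have "m \<le> fst q"
    using tendsto_lowerbound[OF tendsto_fst[OF q]] trivial_limit_at_left_real by blast
  then have "q \<in> kasner_M"
    using \<open>0 < m\<close> by (simp add: kasner_M_def)
  then show ?thesis
    using q assms(1) by (auto simp: inextendible_def approach_def)
qed

lemma future_T_tendsto_infinity:
  assumes future: "timelike_directed p I \<gamma> True" and inext: "inextendible b \<gamma>"
  shows "filterlim T at_top (approach b)"
proof -
  define \<kappa> where "\<kappa> = sqrt (- energy)"
  have "0 < \<kappa>"
    using timelike_directed_velocity(1)[OF future left_endpoint_in_I] by (simp add: \<kappa>_def)
  have incr: "\<kappa> * (y - x) \<le> T y - T x" if "x \<in> I" "y \<in> I" "x \<le> y" for x y
    using future_T_increment_ge[OF future that] by (simp add: \<kappa>_def)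
  from a_less_b show ?thesis
  proof (cases rule: half_open_cases)
    case 1
    have "filterlim (\<lambda>s. (T a - \<kappa> * a) + \<kappa> * s) at_top at_top"
      by (intro filterlim_tendsto_add_at_top[OF tendsto_const]
          filterlim_tendsto_pos_mult_at_top[OF tendsto_const \<open>0 < \<kappa>\<close> filterlim_ident])
    moreover have "eventually (\<lambda>s. (T a - \<kappa> * a) + \<kappa> * s \<le> T s) at_top"
      using eventually_ge_at_top[of a]
      by eventually_elim (use incr[OF left_endpoint_in_I] 1 in \<open>auto simp: algebra_simps\<close>)
    ultimately show ?thesis
      using 1 by (simp add: approach_def filterlim_at_top_mono)
  next
    case (2 B)
    have mono: "T x \<le> T y" if "x \<in> I" "y \<in> I" "x \<le> y" for x y
      using incr[OF that] mult_nonneg_nonneg[of \<kappa> "y - x"] \<open>0 < \<kappa>\<close> \<open>x \<le> y\<close> by linarith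
    then have "mono_on {a..<B} T"
      using 2 by (intro mono_onI) auto
    moreover have "\<exists>s\<in>{a..<B}. Z \<le> T s" for Z
    proof (rule ccontr)
      assume "\<not> (\<exists>s\<in>{a..<B}. Z \<le> T s)"
      moreover have "T a \<le> T s" if "s \<in> I" for s
        using mono[OF left_endpoint_in_I that] that by (simp add: half_open_def)
      ultimately show False
        using extendible_if_T_bounded[OF 2(1) T_pos[OF left_endpoint_in_I], of Z] inext 2(3) by force
    qed
    ultimately show ?thesis
      using filterlim_at_top_at_left_if_mono_on 2 by (simp add: approach_def)
  qed
qed

lemma past_T_tendsto_zero:
  assumes past: "timelike_directed p I \<gamma> False" and inext: "inextendible b \<gamma>"
  shows "(T \<longlongrightarrow> 0) (approach b)"
proof -
  define \<kappa> where "\<kappa> = sqrt (- energy)"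
  have "0 < \<kappa>"
    using timelike_directed_velocity(1)[OF past left_endpoint_in_I] by (simp add: \<kappa>_def)
  have decr: "\<kappa> * (y - x) \<le> T x - T y" if "x \<in> I" "y \<in> I" "x \<le> y" for x y
    using past_T_decrement_ge[OF past that] by (simp add: \<kappa>_def)
  from a_less_b show ?thesis
  proof (cases rule: half_open_cases)
    case 1
    define y where "y = a + T a / \<kappa> + 1"
    have "y \<in> I"
      using 1 \<open>0 < \<kappa>\<close> T_pos[OF left_endpoint_in_I] by (simp add: y_def)
    moreover have "a \<le> y"
      using \<open>0 < \<kappa>\<close> T_pos[OF left_endpoint_in_I] by (simp add: y_def)
    ultimately have "\<kappa> * (y - a) \<le> T a - T y"
      using decr[OF left_endpoint_in_I] by blast
    moreover have "\<kappa> * (y - a) = T a + \<kappa>"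
      using \<open>0 < \<kappa>\<close> by (simp add: y_def field_simps)
    ultimately have "T y \<le> - \<kappa>"
      by linarith
    then show ?thesis
      using T_pos[OF \<open>y \<in> I\<close>] \<open>0 < \<kappa>\<close> by simp
  next
    case (2 B)
    have antimono: "T y \<le> T x" if "x \<in> I" "y \<in> I" "x \<le> y" for x y
      using decr[OF that] mult_nonneg_nonneg[of \<kappa> "y - x"] \<open>0 < \<kappa>\<close> \<open>x \<le> y\<close> by linarith
    then have "antimono_on {a..<B} T"
      using 2 by (intro monotone_onI) auto
    moreover have "0 \<le> T s" if "s \<in> {a..<B}" for s
      using T_pos that 2 by fastforce
    moreover have "\<exists>s\<in>{a..<B}. T s < e" if "0 < e" for e
    proof (rule ccontr)
      assume "\<not> (\<exists>s\<in>{a..<B}. T s < e)"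
      moreover have "T s \<le> T a" if "s \<in> I" for s
        using antimono[OF left_endpoint_in_I that] that by (simp add: half_open_def)
      ultimately show False
        using extendible_if_T_bounded[OF 2(1) \<open>0 < e\<close>, of "T a"] inext 2(3) by force
    qed
    ultimately show ?thesis
      using tendsto_zero_at_left_if_antimono_on 2 by (simp add: approach_def)
  qed
qed

end

theorem lemma3p2:
  fixes p :: "real^'d" and \<gamma> :: "real \<Rightarrow> real \<times> (real^'d)" and a :: real and b :: ereal
  assumes "CARD('d) \<ge> 3"
    and "kasner_exponents p"
    and "ereal a < b"
    and "kasner_geodesic p (half_open a b) \<gamma>"
    and "inextendible b \<gamma>"
  shows "(timelike_directed p (half_open a b) \<gamma> True \<longrightarrow>
            filterlim (\<lambda>s. fst (\<gamma> s)) at_top (approach b))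
       \<and> (timelike_directed p (half_open a b) \<gamma> False \<longrightarrow>
            ((\<lambda>s. fst (\<gamma> s)) \<longlongrightarrow> 0) (approach b))"
proof -
  obtain \<gamma>' \<gamma>'' where "kasner_geodesic_curve p a b \<gamma> \<gamma>' \<gamma>''"
    using assms(3,4) unfolding kasner_geodesic_def kasner_geodesic_curve_def by blast
  then interpret kasner_geodesic_curve p a b \<gamma> \<gamma>' \<gamma>'' .
  show ?thesis
    using future_T_tendsto_infinity past_T_tendsto_zero assms(5) by blast
qed

end
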